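(* Let $H$ be the 28-element set $H=\{n_M : n\in\mathbb{Z}_{12}\}\cup\{n_m : n\in\mathbb{Z}_{12}\}\cup\{n_{\mathrm{aug}} : n\in\{0,1,2,3\}\}$. Let $\mathcal{S}$ be the symmetric relation on $H$ consisting exactly of the pairs $(n_M,n_m)$, $(n_M,(n+4)_m)$, $(n_M,(n\bmod 4)_{\mathrm{aug}})$, $(n_m,n_M)$, $(n_m,(n+8)_M)$, $(n_m,((n+3)\bmod 4)_{\mathrm{aug}})$ for $n\in\mathbb{Z}_{12}$ together with their reverses, and let $\mathcal{T}$ be the symmetric relation on $H$ consisting exactly of the pairs $(n_M,(n+4)_M)$, $(n_M,(n+8)_M)$, $(n_M,(n+1)_m)$, $(n_M,(n+5)_m)$, $(n_M,((n+3)\bmod 4)_{\mathrm{aug}})$, $(n_m,(n+4)_m)$, $(n_m,(n+8)_m)$, $(n_m,(n+11)_M)$, $(n_m,(n+7)_M)$, $(n_m,(n\bmod 4)_{\mathrm{aug}})$ for $n\in\mathbb{Z}_{12}$ together with their reverses. Then the monoid $M_{\mathcal{ST}}$ of relations on $H$ generated by $\mathcal{S}$ and $\mathcal{T}$ under composition of relations contains eight elements and has the presentation $$M_{\mathcal{ST}}=\langle \mathcal{S},\mathcal{T}\mid \mathcal{TS}=\mathcal{ST},\ \mathcal{S}^3=\mathcal{ST},\ \mathcal{T}^4=\mathcal{T}^3,\ \mathcal{TS}^2=\mathcal{T}^2,\ \mathcal{ST}^3=\mathcal{ST}^2\rangle.$$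
   Context: Indices $n$ of $n_M,n_m$ are taken modulo 12; the elements of $H$ are formal labels (musically: major, minor and augmented triads; $\mathcal{S}$ and $\mathcal{T}$ are Douthett's parsimonious relations $\mathcal{P}_{1,0}$ and $\mathcal{P}_{2,0}$). Composition of relations: $\mathcal{R}'\mathcal{R}=\mathcal{R}'\circ\mathcal{R}$ is the set of pairs $(x,z)$ such that there exists $y$ with $(x,y)\in\mathcal{R}$ and $(y,z)\in\mathcal{R}'$; juxtaposition in the presentation denotes this composition, and the monoid identity is the identity relation on $H$. *)

theory Defs
  imports Main
begin

text \<open>Triads: Maj n = n_M, Min n = n_m, Aug n = n_aug. Indices are natural numbers
  reduced modulo 12 (resp. 4); the carrier H only contains the valid indices.\<close>
datatype triad = Maj nat | Min nat | Aug nat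

definition H :: "triad set" where
  "H = {Maj n | n. n < 12} \<union> {Min n | n. n < 12} \<union> {Aug n | n. n < 4}"

definition S_base :: "triad rel" where
  "S_base =
     {(Maj n, Min n) | n. n < 12}
   \<union> {(Maj n, Min ((n + 4) mod 12)) | n. n < 12}
   \<union> {(Maj n, Aug (n mod 4)) | n. n < 12}
   \<union> {(Min n, Maj n) | n. n < 12}
   \<union> {(Min n, Maj ((n + 8) mod 12)) | n. n < 12}
   \<union> {(Min n, Aug ((n + 3) mod 4)) | n. n < 12}"

definition S_rel :: "triad rel" where
  "S_rel = S_base \<union> S_base\<inverse>"

definition T_base :: "triad rel" where
  "T_base =
     {(Maj n, Maj ((n + 4) mod 12)) | n. n < 12}
   \<union> {(Maj n, Maj ((n + 8) mod 12)) | n. n < 12}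
   \<union> {(Maj n, Min ((n + 1) mod 12)) | n. n < 12}
   \<union> {(Maj n, Min ((n + 5) mod 12)) | n. n < 12}
   \<union> {(Maj n, Aug ((n + 3) mod 4)) | n. n < 12}
   \<union> {(Min n, Min ((n + 4) mod 12)) | n. n < 12}
   \<union> {(Min n, Min ((n + 8) mod 12)) | n. n < 12}
   \<union> {(Min n, Maj ((n + 11) mod 12)) | n. n < 12}
   \<union> {(Min n, Maj ((n + 7) mod 12)) | n. n < 12}
   \<union> {(Min n, Aug (n mod 4)) | n. n < 12}"

definition T_rel :: "triad rel" where
  "T_rel = T_base \<union> T_base\<inverse>"

datatype gen = Sg | Tg

definition gen_rel :: "gen \<Rightarrow> triad rel" where
  "gen_rel g = (case g of Sg \<Rightarrow> S_rel | Tg \<Rightarrow> T_rel)"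

text \<open>Evaluation of a word [a1,...,an] as the product a1 a2 ... an, where juxtaposition
  R' R means R' \<circ> R = {(x,z). \<exists>y. (x,y)\<in>R \<and> (y,z)\<in>R'}, i.e. R O R' in Isabelle.\<close>
fun eval_word :: "gen list \<Rightarrow> triad rel" where
  "eval_word [] = Id_on H"
| "eval_word (a # w) = eval_word w O gen_rel a"

definition M_ST :: "triad rel set" where
  "M_ST = range eval_word"

definition pres_rels :: "(gen list \<times> gen list) set" where
  "pres_rels =
    {([Tg, Sg], [Sg, Tg]),
     ([Sg, Sg, Sg], [Sg, Tg]),
     ([Tg, Tg, Tg, Tg], [Tg, Tg, Tg]),
     ([Tg, Sg, Sg], [Tg, Tg]),
     ([Sg, Tg, Tg, Tg], [Sg, Tg, Tg])}"

inductive pres_cong :: "gen list \<Rightarrow> gen list \<Rightarrow> bool" where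
  refl: "pres_cong w w"
| sym: "pres_cong u v \<Longrightarrow> pres_cong v u"
| trans: "pres_cong u v \<Longrightarrow> pres_cong v w \<Longrightarrow> pres_cong u w"
| rel: "(l, r) \<in> pres_rels \<Longrightarrow> pres_cong (u @ l @ v) (u @ r @ v)"

end

theory Submission
  imports Defs
begin

text \<open>Transposition by a semitone maps S and T onto themselves, so every product of generators
  is a transposition-invariant relation on H, and such a relation is determined by its rows at
  the three triads \<open>Maj 0\<close>, \<open>Min 0\<close>, \<open>Aug 0\<close>. Comparing these rows is a small finite
  computation; it verifies the five defining relations and separates the eight words
  \<open>1, S, T, SS, ST, TT, STT, TTT\<close>. Conversely the defining relations reduce every word to one
  of these eight, which gives both the order of the monoid and the completeness of the
  presentation.\<close>

text \<open>Transposition by \<open>k\<close> semitones; augmented triads are fixed by transposition by 4.\<close>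
fun shift :: "nat \<Rightarrow> triad \<Rightarrow> triad" where
  "shift k (Maj n) = Maj ((n + k) mod 12)"
| "shift k (Min n) = Min ((n + k) mod 12)"
| "shift k (Aug n) = Aug ((n + k) mod 4)"

fun origin :: "triad \<Rightarrow> triad" where
  "origin (Maj _) = Maj 0" | "origin (Min _) = Min 0" | "origin (Aug _) = Aug 0"

fun root :: "triad \<Rightarrow> nat" where
  "root (Maj n) = n" | "root (Min n) = n" | "root (Aug n) = n"

lemma mem_H: "x \<in> H \<longleftrightarrow> (case x of Aug n \<Rightarrow> n < 4 | Maj n \<Rightarrow> n < 12 | Min n \<Rightarrow> n < 12)"
  unfolding H_def by (cases x) auto

lemma shift_in_H [simp]: "shift k x \<in> H"
  by (cases x) (simp_all add: mem_H)

lemma shift_shift [simp]: "shift j (shift k x) = shift (k + j) x"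
  by (cases x) (simp_all add: mod_add_left_eq add.assoc)

lemma mod_12_mod_4 [simp]: "(a::nat) mod 12 mod 4 = a mod 4"
  by (simp add: mod_mod_cancel)

lemma add_mod_12_mod_4 [simp]: "(a + b mod 12) mod 4 = (a + b) mod (4::nat)"
  by (metis mod_12_mod_4 mod_add_right_eq)

lemma shift_12: "x \<in> H \<Longrightarrow> shift 12 x = x"
  by (cases x) (auto simp: mem_H, presburger)

lemma shift_origin: "x \<in> H \<Longrightarrow> shift (root x) (origin x) = x"
  by (cases x) (simp_all add: mem_H)

lemma shift_to_origin: "x \<in> H \<Longrightarrow> shift (12 - root x) x = origin x"
  by (cases x) (auto simp: mem_H)

definition shift_invariant :: "triad rel \<Rightarrow> bool" where
  "shift_invariant R \<longleftrightarrow> (\<forall>k x z. (x, z) \<in> R \<longrightarrow> (shift k x, shift k z) \<in> R)"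

lemma shift_invariant_Un: "shift_invariant R \<Longrightarrow> shift_invariant Q \<Longrightarrow> shift_invariant (R \<union> Q)"
  unfolding shift_invariant_def by blast

lemma shift_invariant_converse: "shift_invariant R \<Longrightarrow> shift_invariant (R\<inverse>)"
  unfolding shift_invariant_def by blast

lemma shift_invariant_relcomp: "shift_invariant R \<Longrightarrow> shift_invariant Q \<Longrightarrow> shift_invariant (R O Q)"
  unfolding shift_invariant_def by blast

lemma shift_invariant_Id_on_H: "shift_invariant (Id_on H)"
  unfolding shift_invariant_def by auto

lemma shift_invariant_orbit:
  assumes "\<And>k n. shift k (f n) = f ((n + k) mod 12)" and "\<And>k n. shift k (g n) = g ((n + k) mod 12)"
  shows "shift_invariant {(f n, g n) | n. n < 12}"
  unfolding shift_invariant_def using assms by fastforce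

lemma S_base_shift_invariant: "shift_invariant S_base"
  unfolding S_base_def
  by (intro shift_invariant_Un shift_invariant_orbit) (simp_all add: mod_simps ac_simps)

lemma T_base_shift_invariant: "shift_invariant T_base"
  unfolding T_base_def
  by (intro shift_invariant_Un shift_invariant_orbit) (simp_all add: mod_simps ac_simps)

lemma root_less_12: "x \<in> H \<Longrightarrow> root x < 12"
  by (cases x) (simp_all add: mem_H)

lemma Image_shift_invariant:
  assumes R: "shift_invariant R" "R \<subseteq> H \<times> H" and x: "x \<in> H"
  shows "R `` {x} = shift (root x) ` (R `` {origin x})"
proof (intro set_eqI iffI)
  fix z assume "z \<in> R `` {x}"
  then have xz: "(x, z) \<in> R" and z: "z \<in> H" using R(2) by auto
  have "(origin x, shift (12 - root x) z) \<in> R"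
    using R(1) xz shift_to_origin[OF x] unfolding shift_invariant_def by metis
  moreover have "z = shift (root x) (shift (12 - root x) z)"
    using root_less_12[OF x] shift_12[OF z] by simp
  ultimately show "z \<in> shift (root x) ` (R `` {origin x})" by blast
next
  fix z assume "z \<in> shift (root x) ` (R `` {origin x})"
  then obtain w where "(origin x, w) \<in> R" "z = shift (root x) w" by blast
  then have "(shift (root x) (origin x), z) \<in> R"
    using R(1) unfolding shift_invariant_def by blast
  then show "z \<in> R `` {x}" using shift_origin[OF x] by simp
qed

lemma origin_cases: "origin x \<in> {Maj 0, Min 0, Aug 0}"
  by (cases x) simp_all

lemma shift_invariant_eqI:
  assumes "shift_invariant R" "R \<subseteq> H \<times> H" "shift_invariant Q" "Q \<subseteq> H \<times> H"
    and "\<And>b. b \<in> {Maj 0, Min 0, Aug 0} \<Longrightarrow> R `` {b} = Q `` {b}"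
  shows "R = Q"
proof -
  have "R `` {x} = Q `` {x}" for x
  proof (cases "x \<in> H")
    case True
    then show ?thesis using assms origin_cases Image_shift_invariant by metis
  next
    case False
    then show ?thesis using assms(2,4) by blast
  qed
  then show ?thesis by (metis Image_singleton_iff subrelI subset_antisym)
qed

lemma S_rel_subset: "S_rel \<subseteq> H \<times> H"
  unfolding S_rel_def S_base_def by (auto simp: mem_H)

lemma T_rel_subset: "T_rel \<subseteq> H \<times> H"
  unfolding T_rel_def T_base_def by (auto simp: mem_H)

lemma S_rel_shift_invariant: "shift_invariant S_rel"
  unfolding S_rel_def
  by (intro shift_invariant_Un shift_invariant_converse S_base_shift_invariant)

lemma T_rel_shift_invariant: "shift_invariant T_rel"
  unfolding T_rel_def
  by (intro shift_invariant_Un shift_invariant_converse T_base_shift_invariant)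

lemma S_rel_Image_origin:
  shows "S_rel `` {Maj 0} = {Min 0, Min 4, Aug 0}"
    and "S_rel `` {Min 0} = {Maj 0, Maj 8, Aug 3}"
    and "S_rel `` {Aug 0} = {Maj 0, Maj 4, Maj 8, Min 1, Min 5, Min 9}"
  unfolding S_rel_def S_base_def by (auto; presburger)+

lemma T_rel_Image_origin:
  shows "T_rel `` {Maj 0} = {Maj 4, Maj 8, Min 1, Min 5, Aug 3}"
    and "T_rel `` {Min 0} = {Maj 7, Maj 11, Min 4, Min 8, Aug 0}"
    and "T_rel `` {Aug 0} = {Maj 1, Maj 5, Maj 9, Min 0, Min 4, Min 8}"
  unfolding T_rel_def T_base_def by (auto; presburger)+

lemma S_rel_Image:
  "x \<in> H \<Longrightarrow> S_rel `` {x} = shift (root x) ` (case x of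
      Maj _ \<Rightarrow> {Min 0, Min 4, Aug 0}
    | Min _ \<Rightarrow> {Maj 0, Maj 8, Aug 3}
    | Aug _ \<Rightarrow> {Maj 0, Maj 4, Maj 8, Min 1, Min 5, Min 9})"
proof -
  assume "x \<in> H"
  then have "S_rel `` {x} = shift (root x) ` (S_rel `` {origin x})"
    by (rule Image_shift_invariant[OF S_rel_shift_invariant S_rel_subset])
  then show ?thesis by (cases x) (simp_all add: S_rel_Image_origin)
qed

lemma T_rel_Image:
  "x \<in> H \<Longrightarrow> T_rel `` {x} = shift (root x) ` (case x of
      Maj _ \<Rightarrow> {Maj 4, Maj 8, Min 1, Min 5, Aug 3}
    | Min _ \<Rightarrow> {Maj 7, Maj 11, Min 4, Min 8, Aug 0}
    | Aug _ \<Rightarrow> {Maj 1, Maj 5, Maj 9, Min 0, Min 4, Min 8})"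
proof -
  assume "x \<in> H"
  then have "T_rel `` {x} = shift (root x) ` (T_rel `` {origin x})"
    by (rule Image_shift_invariant[OF T_rel_shift_invariant T_rel_subset])
  then show ?thesis by (cases x) (simp_all add: T_rel_Image_origin)
qed

lemma gen_rel_subset: "gen_rel a \<subseteq> H \<times> H"
  by (cases a) (simp_all add: gen_rel_def S_rel_subset T_rel_subset)

lemma gen_rel_shift_invariant: "shift_invariant (gen_rel a)"
  by (cases a) (simp_all add: gen_rel_def S_rel_shift_invariant T_rel_shift_invariant)

lemma eval_word_subset: "eval_word w \<subseteq> H \<times> H"
  by (induction w) (use gen_rel_subset in auto)

lemma eval_word_shift_invariant: "shift_invariant (eval_word w)"
  by (induction w) (simp_all add: shift_invariant_Id_on_H shift_invariant_relcomp gen_rel_shift_invariant)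

text \<open>With a single \<open>insert\<close> on the left this rule would loop on singletons.\<close>
lemma Image_insert_insert: "R `` insert x (insert y A) = R `` {x} \<union> R `` insert y A"
  by blast

lemma H_eq:
  shows "H = {Maj 0, Maj 1, Maj 2, Maj 3, Maj 4, Maj 5, Maj 6, Maj 7, Maj 8, Maj 9, Maj 10, Maj 11,
    Min 0, Min 1, Min 2, Min 3, Min 4, Min 5, Min 6, Min 7, Min 8, Min 9, Min 10, Min 11,
    Aug 0, Aug 1, Aug 2, Aug 3}" (is "_ = ?enumeration")
proof -
  have "H = Maj ` {..<12} \<union> Min ` {..<12} \<union> Aug ` {..<4}"
    unfolding H_def by blast
  also have "\<dots> = ?enumeration"
    by (simp add: lessThan_nat_numeral; blast)
  finally show ?thesis .
qed

lemma eval_word_eqI: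
  assumes "\<forall>b\<in>{Maj 0, Min 0, Aug 0}. eval_word u `` {b} = eval_word v `` {b}"
  shows "eval_word u = eval_word v"
  using assms by (intro shift_invariant_eqI eval_word_shift_invariant eval_word_subset) blast

lemma eval_word_Nil_Image: "eval_word [] `` A = H \<inter> A"
  by auto

text \<open>Intersecting with the enumerated H after each step keeps computed rows free of
  duplicates and in the order of \<open>H_eq\<close>, so rows of different words compare syntactically.\<close>
lemma eval_word_Cons_Image: "eval_word (a # w) `` A = H \<inter> gen_rel a `` (eval_word w `` A)"
  using gen_rel_subset by (auto simp: relcomp_Image)

lemmas eval_word_Image_simps = eval_word_Nil_Image eval_word_Cons_Image Image_insert_insert
  gen_rel_def S_rel_Image T_rel_Image H_eq Int_insert_left

lemma eval_word_defining_relations: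
  shows "eval_word [Tg, Sg] = eval_word [Sg, Tg]"
    and "eval_word [Sg, Sg, Sg] = eval_word [Sg, Tg]"
    and "eval_word [Tg, Tg, Tg, Tg] = eval_word [Tg, Tg, Tg]"
    and "eval_word [Tg, Sg, Sg] = eval_word [Tg, Tg]"
    and "eval_word [Sg, Tg, Tg, Tg] = eval_word [Sg, Tg, Tg]"
  by (rule eval_word_eqI, simp add: eval_word_Image_simps del: eval_word.simps)+

lemma eval_word_append: "eval_word (u @ v) = eval_word v O eval_word u"
proof (induction u)
  case Nil
  show ?case using eval_word_subset[of v] by auto
next
  case (Cons a u)
  then show ?case by (simp add: O_assoc)
qed

lemma eval_word_pres_cong: "pres_cong u v \<Longrightarrow> eval_word u = eval_word v"
proof (induction rule: pres_cong.induct)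
  case (rel l r u v)
  then have "eval_word l = eval_word r"
    unfolding pres_rels_def using eval_word_defining_relations by auto
  then show ?case by (simp only: eval_word_append)
qed simp_all

definition normal_forms :: "gen list list" where
  "normal_forms = [[], [Sg], [Tg], [Sg, Sg], [Sg, Tg], [Tg, Tg], [Sg, Tg, Tg], [Tg, Tg, Tg]]"

text \<open>The last equation only covers arguments that are not normal forms.\<close>
fun prepend_nf :: "gen \<Rightarrow> gen list \<Rightarrow> gen list" where
  "prepend_nf Sg [] = [Sg]"
| "prepend_nf Sg [Sg] = [Sg, Sg]"
| "prepend_nf Sg [Tg] = [Sg, Tg]"
| "prepend_nf Sg [Sg, Sg] = [Sg, Tg]"
| "prepend_nf Sg [Sg, Tg] = [Tg, Tg]"
| "prepend_nf Sg [Tg, Tg] = [Sg, Tg, Tg]"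
| "prepend_nf Sg [Sg, Tg, Tg] = [Tg, Tg, Tg]"
| "prepend_nf Sg [Tg, Tg, Tg] = [Sg, Tg, Tg]"
| "prepend_nf Tg [] = [Tg]"
| "prepend_nf Tg [Sg] = [Sg, Tg]"
| "prepend_nf Tg [Tg] = [Tg, Tg]"
| "prepend_nf Tg [Sg, Sg] = [Tg, Tg]"
| "prepend_nf Tg [Sg, Tg] = [Sg, Tg, Tg]"
| "prepend_nf Tg [Tg, Tg] = [Tg, Tg, Tg]"
| "prepend_nf Tg [Sg, Tg, Tg] = [Sg, Tg, Tg]"
| "prepend_nf Tg [Tg, Tg, Tg] = [Tg, Tg, Tg]"
| "prepend_nf a w = a # w"

fun nf :: "gen list \<Rightarrow> gen list" where
  "nf [] = []"
| "nf (a # w) = prepend_nf a (nf w)"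

lemma nf_in_normal_forms: "nf w \<in> set normal_forms"
proof (induction w)
  case (Cons a w)
  then show ?case by (cases a) (auto simp: normal_forms_def)
qed (simp add: normal_forms_def)

declare pres_cong.trans [trans]

lemma pres_cong_Cons: "pres_cong u v \<Longrightarrow> pres_cong (a # u) (a # v)"
proof (induction rule: pres_cong.induct)
  case (rel l r u v)
  then show ?case using pres_cong.rel[of l r "a # u" v] by simp
qed (auto intro: pres_cong.intros)

lemma pres_cong_defining_relations:
  shows "pres_cong (u @ [Tg, Sg] @ v) (u @ [Sg, Tg] @ v)"
    and "pres_cong (u @ [Sg, Sg, Sg] @ v) (u @ [Sg, Tg] @ v)"
    and "pres_cong (u @ [Tg, Tg, Tg, Tg] @ v) (u @ [Tg, Tg, Tg] @ v)"
    and "pres_cong (u @ [Tg, Sg, Sg] @ v) (u @ [Tg, Tg] @ v)"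
    and "pres_cong (u @ [Sg, Tg, Tg, Tg] @ v) (u @ [Sg, Tg, Tg] @ v)"
  by (rule pres_cong.rel, simp add: pres_rels_def)+

lemma pres_cong_SST: "pres_cong (Sg # Sg # Tg # v) (Tg # Tg # v)"
proof -
  have "pres_cong (Sg # Sg # Tg # v) (Sg # Tg # Sg # v)"
    using pres_cong.sym[OF pres_cong_defining_relations(1)[of "[Sg]" v]] by simp
  also have "pres_cong (Sg # Tg # Sg # v) (Tg # Sg # Sg # v)"
    using pres_cong.sym[OF pres_cong_defining_relations(1)[of "[]" "Sg # v"]] by simp
  also have "pres_cong (Tg # Sg # Sg # v) (Tg # Tg # v)"
    using pres_cong_defining_relations(4)[of "[]" v] by simp
  finally show ?thesis .
qed

lemma pres_cong_prepend_nf: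
  assumes "n \<in> set normal_forms"
  shows "pres_cong (a # n) (prepend_nf a n)"
proof -
  have "pres_cong [Tg, Sg, Tg, Tg] [Sg, Tg, Tg, Tg]"
    using pres_cong_defining_relations(1)[of "[]" "[Tg, Tg]"] by simp
  also have "pres_cong [Sg, Tg, Tg, Tg] [Sg, Tg, Tg]"
    using pres_cong_defining_relations(5)[of "[]" "[]"] by simp
  finally have TSTT: "pres_cong [Tg, Sg, Tg, Tg] [Sg, Tg, Tg]" .
  show ?thesis
    using assms by (cases a) (auto simp: normal_forms_def intro: pres_cong.refl TSTT
      pres_cong_defining_relations[of "[]" "[]", simplified]
      pres_cong_defining_relations(1)[of "[]" "[Tg]", simplified]
      pres_cong_SST[of "[]"] pres_cong_SST[of "[Tg]"])
qed

lemma pres_cong_nf: "pres_cong w (nf w)"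
proof (induction w)
  case (Cons a w)
  then have "pres_cong (a # w) (a # nf w)" by (rule pres_cong_Cons)
  also have "pres_cong (a # nf w) (nf (a # w))"
    using pres_cong_prepend_nf[OF nf_in_normal_forms] by simp
  finally show ?case .
qed (simp add: pres_cong.refl)

lemma inj_on_eval_word_normal_forms: "inj_on eval_word (set normal_forms)"
proof -
  let ?test = "\<lambda>w. map (\<lambda>z. z \<in> eval_word w `` {Maj 0}) [Maj 0, Maj 1, Maj 2, Maj 4, Min 2, Min 3]"
  have "distinct (map ?test normal_forms)"
    by (simp add: normal_forms_def eval_word_Image_simps del: eval_word.simps Image_singleton_iff)
  then have "inj_on ?test (set normal_forms)" by (simp add: distinct_map)
  then show ?thesis by (auto intro!: inj_onI dest: inj_onD)
qed

lemma M_ST_eq: "M_ST = eval_word ` set normal_forms"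
proof
  show "M_ST \<subseteq> eval_word ` set normal_forms"
    unfolding M_ST_def using eval_word_pres_cong[OF pres_cong_nf] nf_in_normal_forms by blast
  show "eval_word ` set normal_forms \<subseteq> M_ST"
    unfolding M_ST_def by blast
qed

theorem mainTheorem4:
  shows "card M_ST = 8 \<and> (\<forall>u v. eval_word u = eval_word v \<longleftrightarrow> pres_cong u v)"
proof (intro conjI allI iffI)
  show "card M_ST = 8"
    unfolding M_ST_eq card_image[OF inj_on_eval_word_normal_forms]
    by (simp add: normal_forms_def)
next
  fix u v
  assume "eval_word u = eval_word v"
  then have "eval_word (nf u) = eval_word (nf v)"
    using eval_word_pres_cong[OF pres_cong_nf] by metis
  then have "nf u = nf v"
    using inj_on_eval_word_normal_forms nf_in_normal_forms by (auto dest: inj_onD)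
  then show "pres_cong u v"
    using pres_cong_nf pres_cong.sym pres_cong.trans by metis
next
  fix u v
  assume "pres_cong u v"
  then show "eval_word u = eval_word v" by (rule eval_word_pres_cong)
qed

end
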